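(* Let $\Lambda=K\mathcal{Q}/I$ be a finite-dimensional algebra over a field $K$ as in the context, let $A\geqslant1$ and let $\tilde{\Lambda}_A=K\tilde{\mathcal{Q}}_A/\tilde{I}_A$ be its stretched algebra. Let $m_0$ be the number of vertices and $m_1$ the number of arrows of $\mathcal{Q}$. Then: (1) $\tilde{\Lambda}_A$ is a finite-dimensional algebra; (2) $\tilde{\mathcal{Q}}_A$ has $m_0+m_1(A-1)$ vertices and $m_1A$ arrows; (3) $\{\tilde{g}^2_1,\dots,\tilde{g}^2_m\}$, where $\tilde{g}^2_i=\theta^*(g^2_i)$, is a minimal generating set of uniform elements for $\tilde{I}_A$; (4) if $I$ is generated by length homogeneous elements, then $\tilde{I}_A$ is generated by length homogeneous elements; (5) if $I$ is generated by length homogeneous elements all of length $d$, then $\tilde{I}_A$ is generated by length homogeneous elements all of length $dA$; (6) if $\Lambda$ is a monomial algebra, then $\tilde{\Lambda}_A$ is a monomial algebra.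
   Context: Conventions: $\mathcal{Q}$ is a finite quiver; $\mathfrak{o}(\alpha)$, $\mathfrak{t}(\alpha)$ denote start and end of an arrow; paths are written left to right. An element $x\in K\mathcal{Q}$ is uniform if $x=vx=xv'$ for vertices $v,v'$. $\Lambda=K\mathcal{Q}/I$ is finite-dimensional with $I$ an admissible ideal generated by a minimal set $g^2=\{g^2_1,\dots,g^2_m\}$ of uniform elements. An element of a path algebra is length homogeneous if it is a linear combination of paths all of the same length. $K\mathcal{Q}/I$ is monomial if $I$ is generated by paths. Stretched algebra: for $A\geqslant1$, the quiver $\tilde{\mathcal{Q}}_A$ has all vertices of $\mathcal{Q}$ plus, for each arrow $\alpha$ of $\mathcal{Q}$, new vertices $w_1,\dots,w_{A-1}$; each arrow $\alpha$ is replaced by arrows $\alpha_1,\dots,\alpha_A$ with $\mathfrak{o}(\alpha_1)=\mathfrak{o}(\alpha)$, $\mathfrak{t}(\alpha_j)=\mathfrak{o}(\alpha_{j+1})=w_j$ ($1\le j\le A-1$), $\mathfrak{t}(\alpha_A)=\mathfrak{t}(\alpha)$, and the only arrows incident with $w_j$ are $\alpha_j,\alpha_{j+1}$. $\theta^*:K\mathcal{Q}\to K\tilde{\mathcal{Q}}_A$ is the algebra homomorphism fixing vertices and sending $\alpha\mapsto\alpha_1\cdots\alpha_A$; $\tilde{I}_A$ is the ideal generated by $\theta^*(g^2_1),\dots,\theta^*(g^2_m)$; $\tilde{\Lambda}_A=K\tilde{\mathcal{Q}}_A/\tilde{I}_A$. *)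

theory Defs
  imports Main
begin

record ('v, 'a) quiver =
  verts :: "'v set"
  arrs  :: "'a set"
  src   :: "'a \<Rightarrow> 'v"
  tgt   :: "'a \<Rightarrow> 'v"

definition quiver :: "('v, 'a) quiver \<Rightarrow> bool" where
  "quiver Q \<longleftrightarrow> finite (verts Q) \<and> finite (arrs Q) \<and>
     (\<forall>a\<in>arrs Q. src Q a \<in> verts Q \<and> tgt Q a \<in> verts Q)"

text \<open>A path is a start vertex together with a (possibly empty) list of arrows,
  written left to right: consecutive arrows satisfy tgt a = src b.
  The trivial path at v is (v, []).\<close>

fun chain :: "('v, 'a) quiver \<Rightarrow> 'v \<Rightarrow> 'a list \<Rightarrow> bool" where
  "chain Q v [] = True"
| "chain Q v (a # as) = (a \<in> arrs Q \<and> src Q a = v \<and> chain Q (tgt Q a) as)"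

definition is_path :: "('v, 'a) quiver \<Rightarrow> 'v \<times> 'a list \<Rightarrow> bool" where
  "is_path Q p \<longleftrightarrow> fst p \<in> verts Q \<and> chain Q (fst p) (snd p)"

fun pend :: "('v, 'a) quiver \<Rightarrow> 'v \<Rightarrow> 'a list \<Rightarrow> 'v" where
  "pend Q v [] = v"
| "pend Q v (a # as) = pend Q (tgt Q a) as"

text \<open>Elements of the path algebra KQ: finitely supported K-valued functions on the
  paths of Q (coefficient of each path).\<close>

definition PA :: "('v, 'a) quiver \<Rightarrow> ('v \<times> 'a list \<Rightarrow> 'k::field) set" where
  "PA Q = {x. finite {p. x p \<noteq> 0} \<and> (\<forall>p. x p \<noteq> 0 \<longrightarrow> is_path Q p)}"

definition pmult :: "('v, 'a) quiver \<Rightarrow> ('v \<times> 'a list \<Rightarrow> 'k::field)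
    \<Rightarrow> ('v \<times> 'a list \<Rightarrow> 'k) \<Rightarrow> ('v \<times> 'a list \<Rightarrow> 'k)" where
  "pmult Q x y = (\<lambda>(v, cs). \<Sum>k\<in>{0..length cs}.
      x (v, take k cs) * y (pend Q v (take k cs), drop k cs))"

definition path_elem :: "'v \<times> 'a list \<Rightarrow> ('v \<times> 'a list \<Rightarrow> 'k::field)" where
  "path_elem p = (\<lambda>q. if q = p then 1 else 0)"

definition vtx :: "'v \<Rightarrow> ('v \<times> 'a list \<Rightarrow> 'k::field)" where
  "vtx v = path_elem (v, [])"

inductive_set ideal_gen :: "('v, 'a) quiver \<Rightarrow> ('v \<times> 'a list \<Rightarrow> 'k::field) set
    \<Rightarrow> ('v \<times> 'a list \<Rightarrow> 'k) set"
  for Q S where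
  gen: "s \<in> S \<Longrightarrow> s \<in> ideal_gen Q S"
| zero: "(\<lambda>_. 0) \<in> ideal_gen Q S"
| add: "x \<in> ideal_gen Q S \<Longrightarrow> y \<in> ideal_gen Q S \<Longrightarrow> (\<lambda>p. x p + y p) \<in> ideal_gen Q S"
| smult: "x \<in> ideal_gen Q S \<Longrightarrow> (\<lambda>p. c * x p) \<in> ideal_gen Q S"
| lmult: "x \<in> ideal_gen Q S \<Longrightarrow> a \<in> PA Q \<Longrightarrow> pmult Q a x \<in> ideal_gen Q S"
| rmult: "x \<in> ideal_gen Q S \<Longrightarrow> a \<in> PA Q \<Longrightarrow> pmult Q x a \<in> ideal_gen Q S"

definition uniform :: "('v, 'a) quiver \<Rightarrow> ('v \<times> 'a list \<Rightarrow> 'k::field) \<Rightarrow> bool" where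
  "uniform Q x \<longleftrightarrow> (\<exists>v\<in>verts Q. \<exists>v'\<in>verts Q.
      x = pmult Q (vtx v) x \<and> x = pmult Q x (vtx v'))"

text \<open>J^n for the arrow ideal J: elements supported on paths of length at least n.\<close>

definition supp_len_ge :: "('v, 'a) quiver \<Rightarrow> nat \<Rightarrow> ('v \<times> 'a list \<Rightarrow> 'k::field) set" where
  "supp_len_ge Q n = {x \<in> PA Q. \<forall>p. x p \<noteq> 0 \<longrightarrow> n \<le> length (snd p)}"

definition admissible :: "('v, 'a) quiver \<Rightarrow> ('v \<times> 'a list \<Rightarrow> 'k::field) set \<Rightarrow> bool" where
  "admissible Q I \<longleftrightarrow> I \<subseteq> PA Q \<and> (\<exists>N\<ge>2. supp_len_ge Q N \<subseteq> I) \<and> I \<subseteq> supp_len_ge Q 2"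

definition fin_dim_quot :: "('v, 'a) quiver \<Rightarrow> ('v \<times> 'a list \<Rightarrow> 'k::field) set \<Rightarrow> bool" where
  "fin_dim_quot Q I \<longleftrightarrow> (\<exists>F. finite F \<and> F \<subseteq> PA Q \<and>
      (\<forall>x\<in>PA Q. \<exists>c. (\<lambda>p. x p - (\<Sum>f\<in>F. c f * f p)) \<in> I))"

definition min_gen_set :: "('v, 'a) quiver \<Rightarrow> (nat \<Rightarrow> ('v \<times> 'a list \<Rightarrow> 'k::field)) \<Rightarrow> nat
    \<Rightarrow> ('v \<times> 'a list \<Rightarrow> 'k) set \<Rightarrow> bool" where
  "min_gen_set Q g m I \<longleftrightarrow> (\<forall>i<m. g i \<in> PA Q \<and> uniform Q (g i)) \<and>
      ideal_gen Q (g ` {..<m}) = I \<and>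
      (\<forall>i<m. ideal_gen Q (g ` ({..<m} - {i})) \<noteq> I)"

definition len_homog :: "('v \<times> 'a list \<Rightarrow> 'k::field) \<Rightarrow> nat \<Rightarrow> bool" where
  "len_homog x d \<longleftrightarrow> (\<forall>p. x p \<noteq> 0 \<longrightarrow> length (snd p) = d)"

definition gen_by_homog :: "('v, 'a) quiver \<Rightarrow> ('v \<times> 'a list \<Rightarrow> 'k::field) set \<Rightarrow> bool" where
  "gen_by_homog Q I \<longleftrightarrow> (\<exists>G \<subseteq> PA Q. ideal_gen Q G = I \<and> (\<forall>x\<in>G. \<exists>d. len_homog x d))"

definition gen_by_homog_len :: "('v, 'a) quiver \<Rightarrow> ('v \<times> 'a list \<Rightarrow> 'k::field) set \<Rightarrow> nat \<Rightarrow> bool" where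
  "gen_by_homog_len Q I d \<longleftrightarrow> (\<exists>G \<subseteq> PA Q. ideal_gen Q G = I \<and> (\<forall>x\<in>G. len_homog x d))"

definition monomial :: "('v, 'a) quiver \<Rightarrow> ('v \<times> 'a list \<Rightarrow> 'k::field) set \<Rightarrow> bool" where
  "monomial Q I \<longleftrightarrow> (\<exists>P. (\<forall>p\<in>P. is_path Q p) \<and> ideal_gen Q (path_elem ` P) = I)"

text \<open>New vertex w_j of arrow a is Inr (a, j), 1 \<le> j \<le> A-1; new arrow a_j is (a, j), 1 \<le> j \<le> A.\<close>

definition stretch :: "('v, 'a) quiver \<Rightarrow> nat \<Rightarrow> ('v + 'a \<times> nat, 'a \<times> nat) quiver" where
  "stretch Q A = \<lparr> verts = Inl ` verts Q \<union> {Inr (a, j) | a j. a \<in> arrs Q \<and> 1 \<le> j \<and> j \<le> A - 1},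
      arrs = {(a, j) | a j. a \<in> arrs Q \<and> 1 \<le> j \<and> j \<le> A},
      src = (\<lambda>(a, j). if j = 1 then Inl (src Q a) else Inr (a, j - 1)),
      tgt = (\<lambda>(a, j). if j = A then Inl (tgt Q a) else Inr (a, j)) \<rparr>"

definition theta_path :: "nat \<Rightarrow> 'v \<times> 'a list \<Rightarrow> ('v + 'a \<times> nat) \<times> ('a \<times> nat) list" where
  "theta_path A p = (Inl (fst p), concat (map (\<lambda>a. map (\<lambda>j. (a, j)) [1..<A+1]) (snd p)))"

text \<open>theta* is the K-linear extension of theta_path.\<close>

definition theta :: "nat \<Rightarrow> ('v \<times> 'a list \<Rightarrow> 'k::field)
    \<Rightarrow> (('v + 'a \<times> nat) \<times> ('a \<times> nat) list \<Rightarrow> 'k)" where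
  "theta A x = (\<lambda>q. \<Sum>p\<in>{p. x p \<noteq> 0 \<and> theta_path A p = q}. x p)"

end

theory Submission
  imports Defs
begin

text \<open>The map theta sends a path of Q to the path of the stretched quiver in which every arrow
  alpha is replaced by alpha_1 ... alpha_A; it is an injective algebra homomorphism. Its left
  inverse, taking the coefficients of an element on the stretched paths, is multiplicative on
  every product whose factors meet at an original vertex: in the sum defining such a product,
  only the splittings at multiples of A survive. Hence theta reflects ideal membership, which
  transports minimality of the generating set. Finite dimensionality is transported through
  J^N \<subseteq> I: a path of length at least A(N+1) in the stretched quiver reaches an original vertex
  within A steps and then runs through the image of a path of length N.\<close>

section \<open>Path algebras\<close>

lemma pend_append: "pend Q v (xs @ ys) = pend Q (pend Q v xs) ys"
  by (induction xs arbitrary: v) auto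

lemma chain_append: "chain Q v (xs @ ys) \<longleftrightarrow> chain Q v xs \<and> chain Q (pend Q v xs) ys"
  by (induction xs arbitrary: v) auto

lemma chain_take: "chain Q v l \<Longrightarrow> chain Q v (take n l)"
  by (metis append_take_drop_id chain_append)

lemma pend_eq_last: "pend Q v l = (if l = [] then v else tgt Q (last l))"
  by (induction l arbitrary: v) auto

lemma pend_in_verts: "quiver Q \<Longrightarrow> v \<in> verts Q \<Longrightarrow> chain Q v l \<Longrightarrow> pend Q v l \<in> verts Q"
  by (induction l arbitrary: v) (auto simp: quiver_def)

lemma chain_set_subset: "chain Q v l \<Longrightarrow> set l \<subseteq> arrs Q"
  by (induction l arbitrary: v) auto

lemma pmult_apply: "pmult Q x y (v, cs) =
    (\<Sum>k\<le>length cs. x (v, take k cs) * y (pend Q v (take k cs), drop k cs))"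
  by (simp add: pmult_def atLeast0AtMost)

lemma pmult_nonzeroE:
  assumes "pmult Q x y (v, cs) \<noteq> 0"
  obtains k where "k \<le> length cs" "x (v, take k cs) \<noteq> 0"
    "y (pend Q v (take k cs), drop k cs) \<noteq> 0"
  using assms unfolding pmult_apply by (auto elim: sum.not_neutral_contains_not_neutral)

lemma pmult_assoc:
  fixes x y z :: "'v \<times> 'a list \<Rightarrow> 'k::field"
  shows "pmult Q (pmult Q x y) z = pmult Q x (pmult Q y z)"
proof (intro ext, clarify)
  fix v and cs :: "'a list"
  let ?n = "length cs"
  define f where "f i j = x (v, take i cs) * y (pend Q v (take i cs), take j (drop i cs)) *
     z (pend Q (pend Q v (take i cs)) (take j (drop i cs)), drop j (drop i cs))" for i j
  have "pmult Q (pmult Q x y) z (v, cs) = (\<Sum>k\<le>?n. \<Sum>i\<le>k. f i (k - i))"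
    unfolding pmult_apply sum_distrib_right
  proof (rule sum.cong[OF refl], rule sum.cong)
    fix k i assume "k \<in> {..?n}" "i \<in> {..k}"
    then have "i \<le> k" "k \<le> ?n" by auto
    moreover have "take k cs = take i cs @ take (k - i) (drop i cs)"
      using take_add[of i "k - i" cs] \<open>i \<le> k\<close> by simp
    ultimately show "x (v, take i (take k cs)) *
        y (pend Q v (take i (take k cs)), drop i (take k cs)) *
        z (pend Q v (take k cs), drop k cs) = f i (k - i)"
      unfolding f_def by (simp add: pend_append min_def drop_take)
  qed auto
  also have "\<dots> = (\<Sum>(i, j)\<in>{(i, j). i + j \<le> ?n}. f i j)"
    by (rule sum.triangle_reindex_eq[symmetric])
  also have "{(i, j). i + j \<le> ?n} = Sigma {..?n} (\<lambda>i. {..?n - i})"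
    by auto
  also have "(\<Sum>(i, j)\<in>Sigma {..?n} (\<lambda>i. {..?n - i}). f i j) =
      (\<Sum>i\<le>?n. \<Sum>j\<le>?n - i. f i j)"
    by (rule sum.Sigma[symmetric]) auto
  also have "\<dots> = pmult Q x (pmult Q y z) (v, cs)"
    unfolding pmult_apply sum_distrib_left by (simp add: f_def mult.assoc)
  finally show "pmult Q (pmult Q x y) z (v, cs) = pmult Q x (pmult Q y z) (v, cs)" .
qed

lemma pmult_add_left: "pmult Q (\<lambda>q. x q + y q) z = (\<lambda>q. pmult Q x z q + pmult Q y z q)"
  by (intro ext, clarify) (simp add: pmult_apply distrib_right sum.distrib)

lemma pmult_add_right: "pmult Q x (\<lambda>q. y q + z q) = (\<lambda>q. pmult Q x y q + pmult Q x z q)"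
  by (intro ext, clarify) (simp add: pmult_apply distrib_left sum.distrib)

lemma pmult_smult_left: "pmult Q (\<lambda>q. c * x q) y = (\<lambda>q. c * pmult Q x y q)"
  by (intro ext, clarify) (simp add: pmult_apply sum_distrib_left mult.assoc)

lemma pmult_smult_right: "pmult Q x (\<lambda>q. c * y q) = (\<lambda>q. c * pmult Q x y q)"
  by (intro ext, clarify) (simp add: pmult_apply sum_distrib_left mult.left_commute)

lemma pmult_zero_left: "pmult Q (\<lambda>_. 0) y = (\<lambda>_. 0)"
  by (intro ext, clarify) (simp add: pmult_apply)

lemma pmult_zero_right: "pmult Q x (\<lambda>_. 0) = (\<lambda>_. 0)"
  by (intro ext, clarify) (simp add: pmult_apply)

lemma pmult_path_elem:
  fixes l1 l2 :: "'a list"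
  shows "pmult Q (path_elem (v, l1)) (path_elem (pend Q v l1, l2)) =
    (path_elem (v, l1 @ l2) :: _ \<Rightarrow> 'k::field)"
proof (intro ext, clarify)
  fix v' and cs :: "'a list"
  have summand: "(path_elem (v, l1) (v', take k cs) :: 'k) *
      path_elem (pend Q v l1, l2) (pend Q v' (take k cs), drop k cs) =
      (if k = length l1 then path_elem (v, l1 @ l2) (v', cs) else 0)" if "k \<le> length cs" for k
  proof (cases "k = length l1")
    case True
    then have "take k cs = l1 \<and> drop k cs = l2 \<longleftrightarrow> cs = l1 @ l2"
      by (metis append_eq_conv_conj)
    then show ?thesis
      using True by (cases "v' = v \<and> take k cs = l1") (auto simp: path_elem_def)
  next
    case False
    then have "take k cs \<noteq> l1"
      using that by auto
    then show ?thesis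
      using False by (simp add: path_elem_def)
  qed
  have "pmult Q (path_elem (v, l1)) (path_elem (pend Q v l1, l2)) (v', cs) =
      (\<Sum>k\<le>length cs. if k = length l1 then path_elem (v, l1 @ l2) (v', cs) else (0::'k))"
    unfolding pmult_apply using summand by (intro sum.cong) simp_all
  also have "\<dots> = path_elem (v, l1 @ l2) (v', cs)"
    by (auto simp: path_elem_def)
  finally show "pmult Q (path_elem (v, l1)) (path_elem (pend Q v l1, l2)) (v', cs) =
      (path_elem (v, l1 @ l2) (v', cs) :: 'k)" .
qed

lemma path_elem_in_PA: "is_path Q p \<Longrightarrow> (path_elem p :: _ \<Rightarrow> 'k::field) \<in> PA Q"
  unfolding PA_def path_elem_def by simp

lemma sum_path_elem_apply:
  "finite T \<Longrightarrow> (\<Sum>p\<in>T. f p * path_elem p q) = (if q \<in> T then f q else (0::'k::field))"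
  by (simp add: path_elem_def if_distrib[of "\<lambda>c. _ * c"] cong: if_cong)

lemma inj_path_elem: "inj (path_elem :: _ \<Rightarrow> _ \<Rightarrow> 'k::field)"
  by (rule injI) (metis path_elem_def zero_neq_one)

lemma PA_pmult:
  fixes x y :: "'v \<times> 'a list \<Rightarrow> 'k::field"
  assumes "x \<in> PA Q" "y \<in> PA Q"
  shows "pmult Q x y \<in> PA Q"
proof -
  let ?cat = "\<lambda>(p1 :: 'v \<times> 'a list, p2 :: 'v \<times> 'a list). (fst p1, snd p1 @ snd p2)"
  have supp: "(v, cs) \<in> ?cat ` ({p. x p \<noteq> 0} \<times> {p. y p \<noteq> 0}) \<and> is_path Q (v, cs)"
    if nz: "pmult Q x y (v, cs) \<noteq> 0" for v cs
  proof -
    obtain k where "x (v, take k cs) \<noteq> 0" "y (pend Q v (take k cs), drop k cs) \<noteq> 0"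
      using pmult_nonzeroE[OF nz] by blast
    moreover from this have "is_path Q (v, take k cs)"
      and "is_path Q (pend Q v (take k cs), drop k cs)"
      using assms by (auto simp: PA_def)
    ultimately show ?thesis
      using chain_append[of Q v "take k cs" "drop k cs"]
      by (auto simp: is_path_def
          intro!: image_eqI[of _ _ "((v, take k cs), (pend Q v (take k cs), drop k cs))"])
  qed
  have "finite (?cat ` ({p. x p \<noteq> 0} \<times> {p. y p \<noteq> 0}))"
    using assms by (simp add: PA_def)
  then have "finite {q. pmult Q x y q \<noteq> 0}"
    by (rule finite_subset[rotated]) (use supp in auto)
  then show ?thesis
    using supp by (auto simp: PA_def)
qed

lemma ideal_gen_least:
  assumes "S \<subseteq> ideal_gen Q T"
  shows "ideal_gen Q S \<subseteq> ideal_gen Q T"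
proof
  fix x assume "x \<in> ideal_gen Q S"
  then show "x \<in> ideal_gen Q T"
    by induction (use assms in \<open>auto intro: ideal_gen.intros\<close>)
qed

lemma ideal_gen_mono: "S \<subseteq> T \<Longrightarrow> ideal_gen Q S \<subseteq> ideal_gen Q T"
  by (meson ideal_gen.gen ideal_gen_least subset_iff)

lemma ideal_gen_insert: "x \<in> ideal_gen Q S \<Longrightarrow> ideal_gen Q (insert x S) = ideal_gen Q S"
proof (rule subset_antisym)
  assume "x \<in> ideal_gen Q S"
  moreover have "S \<subseteq> ideal_gen Q S"
    by (auto intro: ideal_gen.gen)
  ultimately show "ideal_gen Q (insert x S) \<subseteq> ideal_gen Q S"
    by (intro ideal_gen_least) auto
qed (rule ideal_gen_mono, blast)

lemma ideal_gen_sum: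
  "finite P \<Longrightarrow> (\<And>p. p \<in> P \<Longrightarrow> f p \<in> ideal_gen Q S) \<Longrightarrow> (\<lambda>q. \<Sum>p\<in>P. f p q) \<in> ideal_gen Q S"
proof (induction P rule: finite_induct)
  case empty
  then show ?case by (simp add: ideal_gen.zero)
next
  case (insert p P)
  then have "(\<lambda>q. f p q + (\<lambda>q. \<Sum>p\<in>P. f p q) q) \<in> ideal_gen Q S"
    by (intro ideal_gen.add) auto
  then show ?case using insert by simp
qed

lemma path_elem_through_ideal:
  assumes "quiver Q" and "is_path Q (v, l0 @ l @ e)"
    and "(path_elem (pend Q v l0, l) :: _ \<Rightarrow> 'k::field) \<in> ideal_gen Q S"
  shows "(path_elem (v, l0 @ l @ e) :: _ \<Rightarrow> 'k) \<in> ideal_gen Q S"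
proof -
  have "pend Q v (l0 @ l) \<in> verts Q"
    using assms(1,2) pend_in_verts[of Q v "l0 @ l"] by (auto simp: is_path_def chain_append)
  then have "is_path Q (v, l0)" "is_path Q (pend Q v (l0 @ l), e)"
    using assms(2) by (auto simp: is_path_def chain_append pend_append)
  then have "pmult Q (pmult Q (path_elem (v, l0)) (path_elem (pend Q v l0, l)))
      (path_elem (pend Q v (l0 @ l), e)) \<in> ideal_gen Q S"
    by (intro ideal_gen.rmult ideal_gen.lmult assms(3) path_elem_in_PA)
  then show ?thesis
    by (simp add: pmult_path_elem)
qed

lemma finite_short_paths:
  assumes "quiver Q"
  shows "finite {p. is_path Q p \<and> length (snd p) < L}"
proof (rule finite_subset)
  show "{p. is_path Q p \<and> length (snd p) < L} \<subseteq>
      verts Q \<times> {xs. set xs \<subseteq> arrs Q \<and> length xs \<le> L}"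
    using chain_set_subset by (fastforce simp: is_path_def)
  show "finite (verts Q \<times> {xs. set xs \<subseteq> arrs Q \<and> length xs \<le> L})"
    using assms by (intro finite_cartesian_product finite_lists_length_le) (auto simp: quiver_def)
qed

lemma fin_dim_quot_if_long_paths_in_ideal:
  fixes Q :: "('v, 'a) quiver"
  assumes "quiver Q"
    and long: "\<And>p. is_path Q p \<Longrightarrow> L \<le> length (snd p) \<Longrightarrow>
      (path_elem p :: _ \<Rightarrow> 'k::field) \<in> ideal_gen Q S"
  shows "fin_dim_quot Q (ideal_gen Q S)"
proof -
  define P where "P = {p. is_path Q p \<and> length (snd p) < L}"
  have "finite P"
    unfolding P_def using assms(1) by (rule finite_short_paths)
  have inj: "inj_on (path_elem :: _ \<Rightarrow> _ \<Rightarrow> 'k) P"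
    using inj_path_elem by (rule inj_on_subset) simp
  show ?thesis
    unfolding fin_dim_quot_def
  proof (intro exI[of _ "path_elem ` P"] conjI ballI)
    show "finite (path_elem ` P)"
      using \<open>finite P\<close> by simp
    show "(path_elem ` P :: (_ \<Rightarrow> 'k) set) \<subseteq> PA Q"
      by (auto simp: P_def intro: path_elem_in_PA)
    fix x :: "_ \<Rightarrow> 'k" assume x: "x \<in> PA Q"
    define c :: "('v \<times> 'a list \<Rightarrow> 'k) \<Rightarrow> 'k"
      where "c f = x (inv_into P path_elem f)" for f
    have "(\<Sum>f\<in>path_elem ` P. c f * f q) = (\<Sum>p\<in>P. x p * path_elem p q)" for q
      by (simp add: sum.reindex[OF inj] c_def inv_into_f_f[OF inj] cong: sum.cong)
    then have "(\<lambda>q. x q - (\<Sum>f\<in>path_elem ` P. c f * f q)) =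
        (\<lambda>q. \<Sum>p\<in>{p. x p \<noteq> 0} - P. x p * path_elem p q)"
      using x \<open>finite P\<close> by (auto simp: PA_def sum_path_elem_apply)
    also have "\<dots> \<in> ideal_gen Q S"
    proof (rule ideal_gen_sum)
      show "finite ({p. x p \<noteq> 0} - P)"
        using x by (simp add: PA_def)
      fix p assume "p \<in> {p. x p \<noteq> 0} - P"
      moreover from this have "is_path Q p"
        using x unfolding PA_def by blast
      ultimately have "is_path Q p" "L \<le> length (snd p)"
        by (auto simp: P_def)
      then show "(\<lambda>q. x p * path_elem p q) \<in> ideal_gen Q S"
        by (intro ideal_gen.smult long)
    qed
    finally show "\<exists>c. (\<lambda>q. x q - (\<Sum>f\<in>path_elem ` P. c f * f q)) \<in> ideal_gen Q S"
      by blast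
  qed
qed

section \<open>The stretched quiver\<close>

lemma verts_stretch:
  "verts (stretch Q A) = Inl ` verts Q \<union> Inr ` (arrs Q \<times> {1..A - 1})"
  by (auto simp: stretch_def)

lemma arrs_stretch: "arrs (stretch Q A) = arrs Q \<times> {1..A}"
  by (auto simp: stretch_def)

lemma Inl_in_verts_stretch [simp]: "Inl v \<in> verts (stretch Q A) \<longleftrightarrow> v \<in> verts Q"
  by (auto simp: stretch_def)

lemma Inr_in_verts_stretch [simp]:
  "Inr (a, j) \<in> verts (stretch Q A) \<longleftrightarrow> a \<in> arrs Q \<and> 1 \<le> j \<and> j \<le> A - 1"
  by (auto simp: stretch_def)

lemma in_arrs_stretch [simp]: "(a, j) \<in> arrs (stretch Q A) \<longleftrightarrow> a \<in> arrs Q \<and> 1 \<le> j \<and> j \<le> A"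
  by (auto simp: stretch_def)

lemma src_stretch [simp]:
  "src (stretch Q A) (a, j) = (if j = 1 then Inl (src Q a) else Inr (a, j - 1))"
  by (simp add: stretch_def)

lemma tgt_stretch [simp]:
  "tgt (stretch Q A) (a, j) = (if j = A then Inl (tgt Q a) else Inr (a, j))"
  by (simp add: stretch_def)

lemma quiver_stretch:
  assumes "quiver Q"
  shows "quiver (stretch Q A)"
proof -
  have "finite (verts (stretch Q A))" "finite (arrs (stretch Q A))"
    using assms by (simp_all add: quiver_def verts_stretch arrs_stretch)
  moreover have "src (stretch Q A) x \<in> verts (stretch Q A)"
    and "tgt (stretch Q A) x \<in> verts (stretch Q A)" if "x \<in> arrs (stretch Q A)" for x
    using assms that by (cases x; auto simp: quiver_def)+
  ultimately show ?thesis
    by (simp add: quiver_def)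
qed

lemma card_verts_stretch:
  fixes Q :: "('v, 'a) quiver"
  assumes "quiver Q"
  shows "card (verts (stretch Q A)) = card (verts Q) + card (arrs Q) * (A - 1)"
proof -
  have "finite (verts Q)" "finite (arrs Q)"
    using assms by (auto simp: quiver_def)
  then have "card (Inl ` verts Q \<union> Inr ` (arrs Q \<times> {1..A - 1}) :: ('v + 'a \<times> nat) set) =
      card (verts Q) + card (arrs Q \<times> {1..A - 1})"
    by (subst card_Un_disjoint) (auto simp: card_image)
  then show ?thesis
    by (simp add: verts_stretch card_cartesian_product)
qed

lemma card_arrs_stretch: "card (arrs (stretch Q A)) = card (arrs Q) * A"
  by (simp add: arrs_stretch card_cartesian_product)

declare upt_Suc [simp del] \<comment> \<open>keeps \<open>[1..<A + 1]\<close> in the shape used by \<open>theta_path\<close>\<close>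

definition theta_arrow :: "nat \<Rightarrow> 'a \<Rightarrow> ('a \<times> nat) list" where
  "theta_arrow A a = map (\<lambda>j. (a, j)) [1..<A + 1]"

definition theta_arrows :: "nat \<Rightarrow> 'a list \<Rightarrow> ('a \<times> nat) list" where
  "theta_arrows A as = concat (map (theta_arrow A) as)"

lemma theta_path_eq: "theta_path A p = (Inl (fst p), theta_arrows A (snd p))"
  unfolding theta_path_def theta_arrows_def theta_arrow_def[abs_def] by simp

lemma theta_arrows_Nil [simp]: "theta_arrows A [] = []"
  and theta_arrows_Cons [simp]: "theta_arrows A (a # as) = theta_arrow A a @ theta_arrows A as"
  and theta_arrows_append [simp]: "theta_arrows A (as @ bs) = theta_arrows A as @ theta_arrows A bs"
  by (simp_all add: theta_arrows_def)

lemma length_theta_arrow [simp]: "length (theta_arrow A a) = A"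
  by (simp add: theta_arrow_def)

lemma length_theta_arrows [simp]: "length (theta_arrows A as) = A * length as"
  by (induction as) auto

lemma take_theta_arrows: "take (A * i) (theta_arrows A as) = theta_arrows A (take i as)"
proof (induction as arbitrary: i)
  case (Cons a as)
  then show ?case by (cases i) simp_all
qed simp

lemma drop_theta_arrows: "drop (A * i) (theta_arrows A as) = theta_arrows A (drop i as)"
proof (induction as arbitrary: i)
  case (Cons a as)
  then show ?case by (cases i) simp_all
qed simp

lemma nth_theta_arrows:
  "k < A * length as \<Longrightarrow> theta_arrows A as ! k = (as ! (k div A), k mod A + 1)"
proof (induction as arbitrary: k)
  case (Cons a as)
  show ?case
  proof (cases "k < A")
    case True
    then show ?thesis by (simp add: nth_append theta_arrow_def)
  next
    case False
    moreover have "0 < A"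
      using Cons.prems by (cases A) auto
    ultimately have "theta_arrows A (a # as) ! k = theta_arrows A as ! (k - A)"
      by (simp add: nth_append)
    also have "\<dots> = ((a # as) ! (k div A), k mod A + 1)"
      using Cons False \<open>0 < A\<close> by (simp add: le_div_geq le_mod_geq)
    finally show ?thesis .
  qed
qed simp

lemma theta_arrows_inj:
  assumes "1 \<le> A" and "theta_arrows A as = theta_arrows A bs"
  shows "as = bs"
proof (rule nth_equalityI)
  show len: "length as = length bs"
    using arg_cong[OF assms(2), of length] assms(1) by simp
  fix i assume "i < length as"
  then have "A * i < A * length as"
    using assms(1) by simp
  then show "as ! i = bs ! i"
    using arg_cong[OF assms(2), of "\<lambda>l. l ! (A * i)"] assms(1) len
    by (simp add: nth_theta_arrows)
qed

lemma inj_theta_path: "1 \<le> A \<Longrightarrow> inj (theta_path A)"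
  by (rule injI) (auto simp: theta_path_eq prod_eq_iff intro: theta_arrows_inj)

lemma chain_stretch_block:
  assumes "1 \<le> j" "j \<le> A"
  shows "chain (stretch Q A) (src (stretch Q A) (a, j)) (map (\<lambda>i. (a, i)) [j..<A + 1]) \<longleftrightarrow>
    a \<in> arrs Q"
  using assms(2,1)
proof (induction j rule: inc_induct)
  case base
  then show ?case by (simp add: upt_conv_Cons)
next
  case (step j)
  then show ?case
    by (simp add: upt_conv_Cons[of j])
qed

lemma chain_theta_arrow:
  assumes "1 \<le> A"
  shows "chain (stretch Q A) (Inl v) (theta_arrow A a) \<longleftrightarrow> a \<in> arrs Q \<and> src Q a = v"
proof -
  have "theta_arrow A a = (a, 1) # map (\<lambda>j. (a, j)) [2..<A + 1]"
    using assms by (simp add: theta_arrow_def upt_conv_Cons del: One_nat_def)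
  then have "chain (stretch Q A) (Inl v) (theta_arrow A a) \<longleftrightarrow>
      src Q a = v \<and> chain (stretch Q A) (src (stretch Q A) (a, 1)) (theta_arrow A a)"
    by auto
  then show ?thesis
    using chain_stretch_block[of 1 A Q a] assms by (auto simp: theta_arrow_def)
qed

lemma pend_theta_arrow: "1 \<le> A \<Longrightarrow> pend (stretch Q A) w (theta_arrow A a) = Inl (tgt Q a)"
  by (simp add: pend_eq_last theta_arrow_def last_map)

lemma pend_theta_arrows:
  "1 \<le> A \<Longrightarrow> pend (stretch Q A) (Inl v) (theta_arrows A as) = Inl (pend Q v as)"
  by (induction as arbitrary: v) (auto simp: pend_append pend_theta_arrow)

lemma chain_theta_arrows:
  "1 \<le> A \<Longrightarrow> chain (stretch Q A) (Inl v) (theta_arrows A as) \<longleftrightarrow> chain Q v as"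
  by (induction as arbitrary: v) (auto simp: chain_append pend_theta_arrow chain_theta_arrow)

lemma chain_stretch_inside_block:
  assumes "chain (stretch Q A) w ((a, j) # l)" and "j + length l \<le> A"
  shows "(a, j) # l = map (\<lambda>i. (a, i)) [j..<j + Suc (length l)]"
  using assms
proof (induction l arbitrary: w j)
  case Nil
  then show ?case by (simp add: upt_conv_Cons)
next
  case (Cons b l)
  obtain c k where b: "b = (c, k)" by fastforce
  have "j < A" "1 \<le> k"
    using Cons.prems b by auto
  then have "c = a" "k = Suc j"
    using Cons.prems(1) b by (auto split: if_splits)
  then have "(c, k) # l = map (\<lambda>i. (a, i)) [Suc j..<Suc j + Suc (length l)]"
    using Cons.prems b Cons.IH[of "tgt (stretch Q A) (a, j)" "Suc j"] by auto
  then show ?case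
    using b by (simp add: upt_conv_Cons)
qed

lemma chain_stretch_take_theta_arrow:
  assumes "1 \<le> A" and "chain (stretch Q A) (Inl v) l" and "A \<le> length l"
  obtains a where "take A l = theta_arrow A a"
proof -
  obtain a j l' where l: "l = (a, j) # l'"
    using assms by (cases l) auto
  then have "j = 1"
    using assms(2) by (auto split: if_splits)
  have take_l: "take A l = (a, j) # take (A - 1) l'"
    using assms(1) l by (cases A) auto
  then have "take A l = map (\<lambda>i. (a, i)) [j..<j + Suc (length (take (A - 1) l'))]"
    using chain_stretch_inside_block[of Q A "Inl v" a j] chain_take[OF assms(2), of A]
      \<open>j = 1\<close> assms(1) by simp
  also have "\<dots> = theta_arrow A a"
    using \<open>j = 1\<close> assms l by (simp add: theta_arrow_def)
  finally show thesis
    by (rule that)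
qed

lemma chain_stretch_take_theta_arrows:
  assumes "1 \<le> A" and "chain (stretch Q A) (Inl v) l" and "A * n \<le> length l"
  obtains r where "take (A * n) l = theta_arrows A r" and "length r = n"
  using assms(2,3)
proof (induction n arbitrary: v l thesis)
  case 0
  then show ?case by simp
next
  case (Suc n)
  obtain a where a: "take A l = theta_arrow A a"
    using chain_stretch_take_theta_arrow[OF assms(1) Suc.prems(2)] Suc.prems(3) by auto
  moreover have "chain (stretch Q A) (Inl v) (take A l @ drop A l)"
    using Suc.prems(2) by simp
  ultimately have "chain (stretch Q A) (Inl (tgt Q a)) (drop A l)"
    by (simp add: chain_append pend_theta_arrow[OF assms(1)])
  moreover have "A * n \<le> length (drop A l)"
    using Suc.prems(3) by simp
  ultimately obtain r where "take (A * n) (drop A l) = theta_arrows A r" "length r = n"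
    using Suc.IH by blast
  moreover have "take (A * Suc n) l = take A l @ take (A * n) (drop A l)"
    by (simp add: take_add)
  ultimately show ?case
    using a by (intro Suc.prems(1)[of "a # r"]) simp_all
qed

lemma chain_stretch_reaches_Inl:
  assumes "1 \<le> A" and "chain (stretch Q A) w l" and "A \<le> length l"
  obtains i v where "i < A" and "pend (stretch Q A) w (take i l) = Inl v"
proof -
  obtain a j l' where l: "l = (a, j) # l'"
    using assms by (cases l) auto
  have j: "1 \<le> j" "j \<le> A"
    using assms(2) l by auto
  show thesis
  proof (cases "j = 1")
    case True
    then show thesis
      using assms l by (intro that[of 0]) auto
  next
    case False
    have "take (A + 1 - j) l = map (\<lambda>i. (a, i)) [j..<A + 1]"
      using chain_stretch_inside_block[of Q A w a j "take (A - j) l'"] assms(2,3) l j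
      by (simp add: Suc_diff_le
          chain_append[of _ _ "take (A - j) l'" "drop (A - j) l'", simplified])
    then have "pend (stretch Q A) w (take (A + 1 - j) l) = Inl (tgt Q a)"
      using j by (simp add: pend_eq_last last_map)
    then show thesis
      using False j by (intro that[of "A + 1 - j"]) auto
  qed
qed

lemma long_chain_stretch_decomp:
  assumes "1 \<le> A" and "chain (stretch Q A) w l" and "A * Suc n \<le> length l"
  obtains l0 v r e where "l = l0 @ theta_arrows A r @ e" and "pend (stretch Q A) w l0 = Inl v"
    and "chain Q v r" and "length r = n"
proof -
  have long: "A + A * n \<le> length l"
    using assms(3) by simp
  then have "A \<le> length l"
    by simp
  then obtain i v where i: "i < A" "pend (stretch Q A) w (take i l) = Inl v"
    by (rule chain_stretch_reaches_Inl[OF assms(1,2)])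
  have "chain (stretch Q A) w (take i l @ drop i l)"
    using assms(2) by simp
  then have chain_drop: "chain (stretch Q A) (Inl v) (drop i l)"
    using i(2) by (simp only: chain_append)
  have "A * n \<le> length (drop i l)"
    using long i(1) by simp
  then obtain r where r: "take (A * n) (drop i l) = theta_arrows A r" "length r = n"
    by (rule chain_stretch_take_theta_arrows[OF assms(1) chain_drop])
  have decomp: "l = take i l @ theta_arrows A r @ drop (A * n) (drop i l)"
    unfolding r(1)[symmetric] by (simp only: append_take_drop_id)
  have "chain (stretch Q A) (Inl v) (theta_arrows A r)"
    using chain_take[OF chain_drop, of "A * n"] r(1) by simp
  then have "chain Q v r"
    by (rule chain_theta_arrows[OF assms(1), THEN iffD1])
  then show thesis
    by (rule that[OF decomp i(2) _ r(2)])
qed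

lemma pend_take_theta_arrows_notin_Inl:
  assumes "k \<le> A * length as" and "\<not> A dvd k"
  shows "pend (stretch Q A) w (take k (theta_arrows A as)) \<notin> range Inl"
proof -
  have "0 < k"
    using assms(2) by (cases k) auto
  then have nonempty: "take k (theta_arrows A as) \<noteq> []"
    using assms(1) by (simp flip: length_0_conv)
  then have "last (take k (theta_arrows A as)) = theta_arrows A as ! (k - 1)"
    using \<open>0 < k\<close> assms(1) by (simp add: last_conv_nth min_def)
  also have "\<dots> = (as ! ((k - 1) div A), (k - 1) mod A + 1)"
    using assms(1) \<open>0 < k\<close> by (intro nth_theta_arrows) simp
  finally have "last (take k (theta_arrows A as)) = (as ! ((k - 1) div A), (k - 1) mod A + 1)" .
  moreover have "(k - 1) mod A + 1 \<noteq> A"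
  proof
    assume "(k - 1) mod A + 1 = A"
    then have "k mod A = 0"
      using \<open>0 < k\<close> mod_Suc[of "k - 1" A] by simp
    then show False
      using assms(2) by auto
  qed
  ultimately show ?thesis
    using nonempty by (auto simp: pend_eq_last)
qed

section \<open>The map theta and its left inverse\<close>

lemma sum_atMost_multiples:
  fixes f :: "nat \<Rightarrow> 'a::comm_monoid_add"
  assumes "0 < A" and "\<And>k. k \<le> A * n \<Longrightarrow> \<not> A dvd k \<Longrightarrow> f k = 0"
  shows "(\<Sum>k\<le>A * n. f k) = (\<Sum>i\<le>n. f (A * i))"
proof -
  have "\<not> A dvd k" if "k \<in> {..A * n} - (*) A ` {..n}" for k
  proof
    assume "A dvd k"
    then obtain j where "k = A * j" ..
    with that assms(1) show False by auto
  qed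
  then have "(\<Sum>k\<le>A * n. f k) = sum f ((*) A ` {..n})"
    using assms by (intro sum.mono_neutral_right) auto
  also have "\<dots> = (\<Sum>i\<le>n. f (A * i))"
    using assms(1) by (simp add: sum.reindex inj_on_def)
  finally show ?thesis .
qed

lemma theta_theta_path: "1 \<le> A \<Longrightarrow> theta A x (theta_path A p) = x p"
proof -
  assume "1 \<le> A"
  then have "{p'. x p' \<noteq> 0 \<and> theta_path A p' = theta_path A p} =
      (if x p \<noteq> 0 then {p} else {})"
    using inj_theta_path by (auto dest: injD)
  then show ?thesis
    by (simp add: theta_def)
qed

lemma theta_nonzeroE:
  assumes "theta A x q \<noteq> 0"
  obtains p where "q = theta_path A p" and "x p \<noteq> 0"
proof -
  have "{p. x p \<noteq> 0 \<and> theta_path A p = q} \<noteq> {}"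
  proof
    assume "{p. x p \<noteq> 0 \<and> theta_path A p = q} = {}"
    then show False
      using assms unfolding theta_def by (metis sum.empty)
  qed
  then obtain p where "x p \<noteq> 0 \<and> theta_path A p = q"
    by blast
  then show thesis
    using that by blast
qed

lemma theta_eq_0_outside: "q \<notin> range (theta_path A) \<Longrightarrow> theta A x q = 0"
  by (metis rangeI theta_nonzeroE)

lemma theta_nonzero_ends_Inl:
  assumes "1 \<le> A" and "theta A x (w, l) \<noteq> 0"
  shows "w \<in> range Inl" and "pend (stretch Q A) w l \<in> range Inl"
  using assms(2)
  by (auto elim!: theta_nonzeroE simp: theta_path_eq pend_theta_arrows[OF assms(1)])

definition theta_coeffs :: "nat \<Rightarrow> (('v + 'a \<times> nat) \<times> ('a \<times> nat) list \<Rightarrow> 'k)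
    \<Rightarrow> ('v \<times> 'a list \<Rightarrow> 'k)" where
  "theta_coeffs A y = (\<lambda>p. y (theta_path A p))"

lemma theta_coeffs_theta: "1 \<le> A \<Longrightarrow> theta_coeffs A (theta A x) = x"
  by (simp add: theta_coeffs_def theta_theta_path)

lemma theta_eqI:
  assumes "1 \<le> A" and "\<And>q. u q \<noteq> 0 \<Longrightarrow> q \<in> range (theta_path A)"
    and "theta_coeffs A u = x"
  shows "theta A x = u"
proof
  fix q
  show "theta A x q = u q"
  proof (cases "q \<in> range (theta_path A)")
    case True
    then show ?thesis
      using assms(1,3) by (auto simp: theta_theta_path theta_coeffs_def)
  next
    case False
    then show ?thesis
      using assms(2) theta_eq_0_outside by metis
  qed
qed

lemma theta_coeffs_pmult:
  fixes x y :: "('v + 'a \<times> nat) \<times> ('a \<times> nat) list \<Rightarrow> 'k::field"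
  assumes "1 \<le> A"
    and "(\<forall>w l. x (w, l) \<noteq> 0 \<longrightarrow> pend (stretch Q A) w l \<in> range Inl) \<or>
         (\<forall>w l. y (w, l) \<noteq> 0 \<longrightarrow> w \<in> range Inl)"
  shows "theta_coeffs A (pmult (stretch Q A) x y) = pmult Q (theta_coeffs A x) (theta_coeffs A y)"
proof (intro ext, clarify)
  fix v and cs :: "'a list"
  let ?t = "theta_arrows A cs"
  let ?f = "\<lambda>k. x (Inl v, take k ?t) * y (pend (stretch Q A) (Inl v) (take k ?t), drop k ?t)"
  have "?f k = 0" if "k \<le> A * length cs" "\<not> A dvd k" for k
    using pend_take_theta_arrows_notin_Inl[OF that, of Q "Inl v"] assms(2) by auto
  then have "(\<Sum>k\<le>A * length cs. ?f k) = (\<Sum>i\<le>length cs. ?f (A * i))"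
    using assms(1) by (intro sum_atMost_multiples) auto
  then show "theta_coeffs A (pmult (stretch Q A) x y) (v, cs) =
      pmult Q (theta_coeffs A x) (theta_coeffs A y) (v, cs)"
    by (simp add: theta_coeffs_def theta_path_eq pmult_apply take_theta_arrows drop_theta_arrows
        pend_theta_arrows[OF assms(1)])
qed

lemma theta_pmult:
  fixes x y :: "'v \<times> 'a list \<Rightarrow> 'k::field"
  assumes "1 \<le> A"
  shows "theta A (pmult Q x y) = pmult (stretch Q A) (theta A x) (theta A y)"
proof (rule theta_eqI[OF assms])
  fix q assume "pmult (stretch Q A) (theta A x) (theta A y) q \<noteq> 0"
  moreover obtain w l where q: "q = (w, l)"
    by fastforce
  ultimately obtain k where "theta A x (w, take k l) \<noteq> 0"
    "theta A y (pend (stretch Q A) w (take k l), drop k l) \<noteq> 0"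
    by (auto elim: pmult_nonzeroE)
  then obtain p1 p2 where "(w, take k l) = theta_path A p1"
    and "(pend (stretch Q A) w (take k l), drop k l) = theta_path A p2"
    by (auto elim!: theta_nonzeroE)
  then have "q = theta_path A (fst p1, snd p1 @ snd p2)"
    using q by (simp add: theta_path_eq) (metis append_take_drop_id)
  then show "q \<in> range (theta_path A)"
    by blast
next
  have "\<forall>w l. theta A y (w, l) \<noteq> 0 \<longrightarrow> w \<in> range Inl"
    using theta_nonzero_ends_Inl(1)[OF assms] by blast
  then show "theta_coeffs A (pmult (stretch Q A) (theta A x) (theta A y)) = pmult Q x y"
    by (simp add: theta_coeffs_pmult[OF assms] theta_coeffs_theta[OF assms])
qed

lemma theta_add: "1 \<le> A \<Longrightarrow> theta A (\<lambda>p. x p + y p) = (\<lambda>q. theta A x q + theta A y q)"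
  by (rule theta_eqI) (auto simp: theta_coeffs_def theta_theta_path, metis add_0 theta_eq_0_outside)

lemma theta_smult: "1 \<le> A \<Longrightarrow> theta A (\<lambda>p. c * x p) = (\<lambda>q. c * theta A x q)"
  by (rule theta_eqI)
    (auto simp: theta_coeffs_def theta_theta_path intro: ccontr dest: theta_eq_0_outside)

lemma theta_zero: "theta A (\<lambda>_. 0) = (\<lambda>_. 0)"
  by (simp add: theta_def)

lemma theta_path_elem: "1 \<le> A \<Longrightarrow> theta A (path_elem p) = path_elem (theta_path A p)"
  by (rule theta_eqI)
    (auto simp: theta_coeffs_def path_elem_def inj_eq[OF inj_theta_path] split: if_splits)

lemma theta_vtx: "1 \<le> A \<Longrightarrow> theta A (vtx v) = vtx (Inl v)"
  by (simp add: vtx_def theta_path_elem theta_path_eq)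

lemma is_path_theta_path: "1 \<le> A \<Longrightarrow> is_path (stretch Q A) (theta_path A p) \<longleftrightarrow> is_path Q p"
  by (simp add: is_path_def theta_path_eq chain_theta_arrows)

lemma theta_in_PA:
  assumes "1 \<le> A" and "x \<in> PA Q"
  shows "theta A x \<in> PA (stretch Q A)"
proof -
  have "{q. theta A x q \<noteq> 0} \<subseteq> theta_path A ` {p. x p \<noteq> 0}"
    by (auto elim: theta_nonzeroE)
  moreover have "finite (theta_path A ` {p. x p \<noteq> 0})"
    using assms(2) by (simp add: PA_def)
  ultimately have "finite {q. theta A x q \<noteq> 0}"
    by (rule finite_subset)
  then show ?thesis
    using assms by (auto simp: PA_def is_path_theta_path elim!: theta_nonzeroE)
qed

lemma theta_coeffs_in_PA:
  assumes "1 \<le> A" and "y \<in> PA (stretch Q A)"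
  shows "theta_coeffs A y \<in> PA Q"
  unfolding PA_def
proof (intro CollectI conjI allI impI)
  have "finite (theta_path A -` {q. y q \<noteq> 0})"
    using assms(2) inj_theta_path[OF assms(1)] by (intro finite_vimageI) (simp_all add: PA_def)
  then show "finite {p. theta_coeffs A y p \<noteq> 0}"
    by (simp add: theta_coeffs_def vimage_def)
  fix p assume "theta_coeffs A y p \<noteq> 0"
  then have "is_path (stretch Q A) (theta_path A p)"
    using assms(2) unfolding PA_def theta_coeffs_def by blast
  then show "is_path Q p"
    using is_path_theta_path[OF assms(1)] by blast
qed

lemma theta_mem_ideal_gen:
  assumes "1 \<le> A" and "x \<in> ideal_gen Q S"
  shows "theta A x \<in> ideal_gen (stretch Q A) (theta A ` S)"
  using assms(2)
proof induction
  case (gen s)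
  then show ?case by (auto intro: ideal_gen.gen)
next
  case zero
  then show ?case by (simp add: theta_zero ideal_gen.zero)
next
  case (add x y)
  then show ?case by (simp add: theta_add[OF assms(1)] ideal_gen.add)
next
  case (smult x c)
  then show ?case by (simp add: theta_smult[OF assms(1)] ideal_gen.smult)
next
  case (lmult x a)
  then show ?case
    by (simp add: theta_pmult[OF assms(1)] ideal_gen.lmult theta_in_PA[OF assms(1)])
next
  case (rmult x a)
  then show ?case
    by (simp add: theta_pmult[OF assms(1)] ideal_gen.rmult theta_in_PA[OF assms(1)])
qed

lemma theta_coeffs_pmult_theta:
  fixes s :: "'v \<times> 'a list \<Rightarrow> 'k::field"
  assumes "1 \<le> A"
  shows "theta_coeffs A (pmult (stretch Q A) a (theta A s)) = pmult Q (theta_coeffs A a) s"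
    and "theta_coeffs A (pmult (stretch Q A) (theta A s) b) = pmult Q s (theta_coeffs A b)"
    and "theta_coeffs A (pmult (stretch Q A) a (pmult (stretch Q A) (theta A s) b)) =
      pmult Q (theta_coeffs A a) (pmult Q s (theta_coeffs A b))"
proof -
  have starts: "\<forall>w l. theta A s (w, l) \<noteq> 0 \<longrightarrow> w \<in> range Inl"
    and ends: "\<forall>w l. theta A s (w, l) \<noteq> 0 \<longrightarrow> pend (stretch Q A) w l \<in> range Inl"
    using theta_nonzero_ends_Inl[OF assms] by blast+
  moreover have "\<forall>w l. pmult (stretch Q A) (theta A s) b (w, l) \<noteq> 0 \<longrightarrow> w \<in> range Inl"
    using starts by (metis pmult_nonzeroE)
  ultimately show
    "theta_coeffs A (pmult (stretch Q A) a (theta A s)) = pmult Q (theta_coeffs A a) s"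
    and "theta_coeffs A (pmult (stretch Q A) (theta A s) b) = pmult Q s (theta_coeffs A b)"
    and "theta_coeffs A (pmult (stretch Q A) a (pmult (stretch Q A) (theta A s) b)) =
      pmult Q (theta_coeffs A a) (pmult Q s (theta_coeffs A b))"
    by (simp_all add: theta_coeffs_pmult[OF assms] theta_coeffs_theta[OF assms])
qed

lemma theta_coeffs_mem_ideal_gen:
  fixes S :: "('v \<times> 'a list \<Rightarrow> 'k::field) set"
  assumes A: "1 \<le> A" and "y \<in> ideal_gen (stretch Q A) (theta A ` S)"
  shows "theta_coeffs A y \<in> ideal_gen Q S"
proof -
  let ?Q = "stretch Q A" and ?I = "ideal_gen Q S" and ?c = "theta_coeffs A"
  \<comment> \<open>No unit element is at hand, so one- and two-sided multiples are carried along.\<close>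
  have "?c y \<in> ?I \<and> (\<forall>a\<in>PA ?Q. ?c (pmult ?Q a y) \<in> ?I) \<and>
      (\<forall>b\<in>PA ?Q. ?c (pmult ?Q y b) \<in> ?I) \<and>
      (\<forall>a\<in>PA ?Q. \<forall>b\<in>PA ?Q. ?c (pmult ?Q a (pmult ?Q y b)) \<in> ?I)"
    using assms(2)
  proof induction
    case (gen s)
    then obtain s0 where "s = theta A s0" "s0 \<in> S"
      by blast
    then show ?case
      by (simp add: theta_coeffs_pmult_theta[OF A] theta_coeffs_theta[OF A])
        (blast intro: ideal_gen.intros theta_coeffs_in_PA[OF A])
  next
    case zero
    then show ?case
      by (simp add: pmult_zero_left pmult_zero_right theta_coeffs_def ideal_gen.zero)
  next
    case (add x y)
    then show ?case
      by (simp add: pmult_add_left pmult_add_right theta_coeffs_def ideal_gen.add)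
  next
    case (smult x c)
    then show ?case
      by (simp add: pmult_smult_left pmult_smult_right theta_coeffs_def ideal_gen.smult)
  next
    case (lmult x a)
    then show ?case
      by (simp only: pmult_assoc[symmetric]) (blast intro: PA_pmult)
  next
    case (rmult x b)
    then show ?case
      by (simp only: pmult_assoc) (blast intro: PA_pmult)
  qed
  then show ?thesis
    by blast
qed

section \<open>Transport of the properties\<close>

lemma uniform_theta:
  assumes "1 \<le> A" and "uniform Q x"
  shows "uniform (stretch Q A) (theta A x)"
proof -
  obtain v v' where "v \<in> verts Q" "v' \<in> verts Q"
    and "x = pmult Q (vtx v) x" "x = pmult Q x (vtx v')"
    using assms(2) by (auto simp: uniform_def)
  then show ?thesis
    unfolding uniform_def
    by (metis Inl_in_verts_stretch assms(1) theta_pmult theta_vtx)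
qed

lemma len_homog_theta: "len_homog x d \<Longrightarrow> len_homog (theta A x) (d * A)"
  by (auto simp: len_homog_def theta_path_eq elim!: theta_nonzeroE)

lemma theta_ideal_gen_subset:
  assumes "1 \<le> A" and "ideal_gen Q G \<subseteq> ideal_gen Q H"
  shows "ideal_gen (stretch Q A) (theta A ` G) \<subseteq> ideal_gen (stretch Q A) (theta A ` H)"
  using assms by (auto intro!: ideal_gen_least theta_mem_ideal_gen intro: ideal_gen.gen)

lemma theta_ideal_gen_cong:
  "1 \<le> A \<Longrightarrow> ideal_gen Q G = ideal_gen Q H \<Longrightarrow>
    ideal_gen (stretch Q A) (theta A ` G) = ideal_gen (stretch Q A) (theta A ` H)"
  by (simp add: subset_antisym theta_ideal_gen_subset)

lemma gen_by_homog_theta: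
  assumes "1 \<le> A" and "gen_by_homog Q (ideal_gen Q G)"
  shows "gen_by_homog (stretch Q A) (ideal_gen (stretch Q A) (theta A ` G))"
proof -
  obtain H where H: "H \<subseteq> PA Q" "ideal_gen Q H = ideal_gen Q G" "\<forall>x\<in>H. \<exists>d. len_homog x d"
    using assms(2) by (auto simp: gen_by_homog_def)
  have "theta A ` H \<subseteq> PA (stretch Q A)"
    using H(1) theta_in_PA[OF assms(1)] by blast
  moreover have "\<forall>y\<in>theta A ` H. \<exists>d. len_homog y d"
    using H(3) len_homog_theta by blast
  ultimately show ?thesis
    unfolding gen_by_homog_def using theta_ideal_gen_cong[OF assms(1) H(2)] by blast
qed

lemma gen_by_homog_len_theta:
  assumes "1 \<le> A" and "gen_by_homog_len Q (ideal_gen Q G) d"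
  shows "gen_by_homog_len (stretch Q A) (ideal_gen (stretch Q A) (theta A ` G)) (d * A)"
proof -
  obtain H where H: "H \<subseteq> PA Q" "ideal_gen Q H = ideal_gen Q G" "\<forall>x\<in>H. len_homog x d"
    using assms(2) by (auto simp: gen_by_homog_len_def)
  have "theta A ` H \<subseteq> PA (stretch Q A)"
    using H(1) theta_in_PA[OF assms(1)] by blast
  moreover have "\<forall>y\<in>theta A ` H. len_homog y (d * A)"
    using H(3) len_homog_theta by blast
  ultimately show ?thesis
    unfolding gen_by_homog_len_def using theta_ideal_gen_cong[OF assms(1) H(2)] by blast
qed

lemma monomial_theta:
  fixes G :: "('v \<times> 'a list \<Rightarrow> 'k::field) set"
  assumes "1 \<le> A" and "monomial Q (ideal_gen Q G)"
  shows "monomial (stretch Q A) (ideal_gen (stretch Q A) (theta A ` G))"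
proof -
  obtain P where P: "\<forall>p\<in>P. is_path Q p" "ideal_gen Q (path_elem ` P) = ideal_gen Q G"
    using assms(2) by (auto simp: monomial_def)
  have "(path_elem ` theta_path A ` P :: (_ \<Rightarrow> 'k) set) = theta A ` path_elem ` P"
    using assms(1) by (simp add: image_image theta_path_elem)
  then have "ideal_gen (stretch Q A) (path_elem ` theta_path A ` P) =
      ideal_gen (stretch Q A) (theta A ` G)"
    using theta_ideal_gen_cong[OF assms(1) P(2)] by simp
  moreover have "\<forall>q\<in>theta_path A ` P. is_path (stretch Q A) q"
    using P(1) is_path_theta_path[OF assms(1)] by blast
  ultimately show ?thesis
    unfolding monomial_def by blast
qed

lemma min_gen_set_theta:
  assumes A: "1 \<le> A" and min: "min_gen_set Q g m (ideal_gen Q (g ` {..<m}))"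
  shows "min_gen_set (stretch Q A) (\<lambda>i. theta A (g i)) m
    (ideal_gen (stretch Q A) ((\<lambda>i. theta A (g i)) ` {..<m}))"
  unfolding min_gen_set_def
proof (intro conjI allI impI notI)
  fix i assume "i < m"
  then show "theta A (g i) \<in> PA (stretch Q A)" "uniform (stretch Q A) (theta A (g i))"
    using min A by (auto simp: min_gen_set_def theta_in_PA uniform_theta)
next
  fix i assume "i < m"
    and redundant: "ideal_gen (stretch Q A) ((\<lambda>i. theta A (g i)) ` ({..<m} - {i})) =
      ideal_gen (stretch Q A) ((\<lambda>i. theta A (g i)) ` {..<m})"
  then have "theta A (g i) \<in> ideal_gen (stretch Q A) (theta A ` g ` ({..<m} - {i}))"
    by (auto simp: image_image intro: ideal_gen.gen)
  then have "g i \<in> ideal_gen Q (g ` ({..<m} - {i}))"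
    using theta_coeffs_mem_ideal_gen[OF A] theta_coeffs_theta[OF A] by metis
  then have "ideal_gen Q (g ` ({..<m} - {i})) = ideal_gen Q (insert (g i) (g ` ({..<m} - {i})))"
    by (simp add: ideal_gen_insert)
  also have "insert (g i) (g ` ({..<m} - {i})) = g ` {..<m}"
    using \<open>i < m\<close> by auto
  finally show False
    using min \<open>i < m\<close> by (auto simp: min_gen_set_def)
qed simp

lemma long_path_in_theta_ideal:
  fixes Q :: "('v, 'a) quiver" and S :: "('v \<times> 'a list \<Rightarrow> 'k::field) set"
  assumes A: "1 \<le> A" and Q: "quiver Q" and N: "supp_len_ge Q N \<subseteq> ideal_gen Q S"
    and path: "is_path (stretch Q A) (w, l)" and long: "A * Suc N \<le> length l"
  shows "(path_elem (w, l) :: _ \<Rightarrow> 'k) \<in> ideal_gen (stretch Q A) (theta A ` S)"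
proof -
  have "chain (stretch Q A) w l"
    using path by (simp add: is_path_def)
  then obtain l0 v r e where l: "l = l0 @ theta_arrows A r @ e"
    and v: "pend (stretch Q A) w l0 = Inl v" and r: "chain Q v r" "length r = N"
    by (rule long_chain_stretch_decomp[OF A _ long])
  have "Inl v \<in> verts (stretch Q A)"
    using path pend_in_verts[OF quiver_stretch[OF Q, of A], of w l0] v
    by (simp add: is_path_def l chain_append)
  then have "is_path Q (v, r)"
    using r(1) by (simp add: is_path_def)
  then have "(path_elem (v, r) :: _ \<Rightarrow> 'k) \<in> PA Q"
    by (rule path_elem_in_PA)
  then have "(path_elem (v, r) :: _ \<Rightarrow> 'k) \<in> supp_len_ge Q N"
    using r(2) by (simp add: supp_len_ge_def path_elem_def)
  then have "(path_elem (v, r) :: _ \<Rightarrow> 'k) \<in> ideal_gen Q S"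
    using N by blast
  then have "theta A (path_elem (v, r) :: _ \<Rightarrow> 'k) \<in> ideal_gen (stretch Q A) (theta A ` S)"
    by (rule theta_mem_ideal_gen[OF A])
  then show ?thesis
    using path v l quiver_stretch[OF Q]
    by (auto simp: theta_path_elem[OF A] theta_path_eq intro: path_elem_through_ideal)
qed

lemma fin_dim_quot_stretch:
  fixes Q :: "('v, 'a) quiver" and S :: "('v \<times> 'a list \<Rightarrow> 'k::field) set"
  assumes "1 \<le> A" and "quiver Q" and "supp_len_ge Q N \<subseteq> ideal_gen Q S"
  shows "fin_dim_quot (stretch Q A) (ideal_gen (stretch Q A) (theta A ` S))"
  using quiver_stretch[OF assms(2)]
  by (rule fin_dim_quot_if_long_paths_in_ideal) (use long_path_in_theta_ideal[OF assms] in auto)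

theorem proposition1p7:
  fixes Q :: "('v, 'a) quiver"
    and g :: "nat \<Rightarrow> ('v \<times> 'a list \<Rightarrow> 'k::field)"
    and m A :: nat
  assumes "quiver Q"
    and "admissible Q (ideal_gen Q (g ` {..<m}))"
    and "fin_dim_quot Q (ideal_gen Q (g ` {..<m}))"
    and "min_gen_set Q g m (ideal_gen Q (g ` {..<m}))"
    and "1 \<le> A"
  shows
   "fin_dim_quot (stretch Q A) (ideal_gen (stretch Q A) ((\<lambda>i. theta A (g i)) ` {..<m}))
  \<and> card (verts (stretch Q A)) = card (verts Q) + card (arrs Q) * (A - 1)
  \<and> card (arrs (stretch Q A)) = card (arrs Q) * A
  \<and> min_gen_set (stretch Q A) (\<lambda>i. theta A (g i)) m
       (ideal_gen (stretch Q A) ((\<lambda>i. theta A (g i)) ` {..<m}))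
  \<and> (gen_by_homog Q (ideal_gen Q (g ` {..<m})) \<longrightarrow>
       gen_by_homog (stretch Q A) (ideal_gen (stretch Q A) ((\<lambda>i. theta A (g i)) ` {..<m})))
  \<and> (\<forall>d. gen_by_homog_len Q (ideal_gen Q (g ` {..<m})) d \<longrightarrow>
       gen_by_homog_len (stretch Q A) (ideal_gen (stretch Q A) ((\<lambda>i. theta A (g i)) ` {..<m})) (d * A))
  \<and> (monomial Q (ideal_gen Q (g ` {..<m})) \<longrightarrow>
       monomial (stretch Q A) (ideal_gen (stretch Q A) ((\<lambda>i. theta A (g i)) ` {..<m})))"
proof -
  let ?G = "g ` {..<m}"
  obtain N where "supp_len_ge Q N \<subseteq> ideal_gen Q ?G"
    using assms(2) by (auto simp: admissible_def)
  then have "fin_dim_quot (stretch Q A) (ideal_gen (stretch Q A) (theta A ` ?G))"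
    by (rule fin_dim_quot_stretch[OF assms(5,1)])
  then show ?thesis
    using card_verts_stretch[OF assms(1), of A] card_arrs_stretch[of Q A]
      min_gen_set_theta[OF assms(5,4)] gen_by_homog_theta[OF assms(5), of Q ?G]
      gen_by_homog_len_theta[OF assms(5), of Q ?G] monomial_theta[OF assms(5), of Q ?G]
    by (simp add: image_image)
qed

end
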